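(* Fix positive integers $m,n$ and $\alpha\in[0,1]$. Among all approval elections with $m$ candidates, $n$ voters, and saturation $\alpha$, an election $E$ has the largest value of $\mathrm{chd}(E)$ if and only if (a) all candidates are approved in some vote in $\mathrm{cen}(E)$, or (b) all candidates are disapproved in some vote in $\mathrm{cen}(E)$, or (c) for each candidate $c_j$, $|A(c_j)|\in\{\lfloor n/2\rfloor,\lceil n/2\rceil\}$.
   Context: An (approval) election is $E=(C,V)$ with $C=\{c_1,\dots,c_m\}$ and voters $V=(v_1,\dots,v_n)$, each vote a binary vector in $\{0,1\}^m$; $A(c)$ is the set of voters approving $c$, $A(v)$ the set of candidates approved by $v$. Saturation is $\mathrm{satr}(E)=\frac{1}{nm}\sum_{v\in V}|A(v)|$. $\mathrm{ham}(u,v)=\sum_j|u[j]-v[j]|$. A vote $u$ is central for $E$ if for each candidate $c_j$, $u[j]=v_i[j]$ for at least half of the voters $v_i$; $\mathrm{cen}(E)$ is the set of central votes. The central Hamming distance is $\mathrm{chd}(E)=\sum_{v_i\in V}\mathrm{ham}(v_i,u)$ for any $u\in\mathrm{cen}(E)$ (independent of the choice of $u$). *)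

theory Defs
  imports Complex_Main
begin

(* An approval election with m candidates c_0..c_{m-1} and n voters v_0..v_{n-1}
   is represented by V :: nat => nat => bool, where V i j  means voter i approves
   candidate j.  Only indices i < n, j < m are meaningful. *)

type_synonym election = "nat \<Rightarrow> nat \<Rightarrow> bool"

definition approvers :: "nat \<Rightarrow> election \<Rightarrow> nat \<Rightarrow> nat set" where
  "approvers n V j = {i. i < n \<and> V i j}"

definition approved :: "nat \<Rightarrow> election \<Rightarrow> nat \<Rightarrow> nat set" where
  "approved m V i = {j. j < m \<and> V i j}"

definition satr :: "nat \<Rightarrow> nat \<Rightarrow> election \<Rightarrow> real" where
  "satr m n V = (\<Sum>i<n. real (card (approved m V i))) / (real n * real m)"

definition ham :: "nat \<Rightarrow> (nat \<Rightarrow> bool) \<Rightarrow> (nat \<Rightarrow> bool) \<Rightarrow> nat" where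
  "ham m u v = card {j. j < m \<and> u j \<noteq> v j}"

definition central :: "nat \<Rightarrow> nat \<Rightarrow> election \<Rightarrow> (nat \<Rightarrow> bool) \<Rightarrow> bool" where
  "central m n V u \<longleftrightarrow> (\<forall>j<m. 2 * card {i. i < n \<and> V i j = u j} \<ge> n)"

definition cen :: "nat \<Rightarrow> nat \<Rightarrow> election \<Rightarrow> (nat \<Rightarrow> bool) set" where
  "cen m n V = {u. central m n V u}"

definition chd :: "nat \<Rightarrow> nat \<Rightarrow> election \<Rightarrow> nat" where
  "chd m n V = (\<Sum>i<n. ham m (V i) (SOME u. u \<in> cen m n V))"

end

theory Submission
  imports Defs
begin

(* Saturation and central Hamming distance depend on an election only through the approval
   counts a_j = |A(c_j)|: the total number of approvals is n m satr(E), and a central vote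
   follows the majority on every candidate, so chd(E) is the sum over j of
   min(a_j, n - a_j).  Since every vector 0 <= a_j <= n is the count vector of some election,
   the question is which vectors with a fixed total S maximise this sum.  The sum is at most
   S, at most m n - S and at most m floor(n/2); splitting S as evenly as possible among the
   candidates attains one of these bounds.  So a vector is optimal iff it attains one of
   them, i.e. iff all a_j >= n/2 (a), all a_j <= n/2 (b), or all a_j are floor(n/2) or
   ceil(n/2) (c). *)

lemma sum_eq_sum_iff_pointwise:
  fixes f g :: "'i \<Rightarrow> 'a::ordered_cancel_comm_monoid_add"
  assumes "finite A" and "\<And>x. x \<in> A \<Longrightarrow> f x \<le> g x"
  shows "sum f A = sum g A \<longleftrightarrow> (\<forall>x\<in>A. f x = g x)"
  using sum_mono_inv[of f A g] assms by (auto intro: sum.cong)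

lemma sum_card_rows_eq_sum_card_columns:
  fixes m n :: nat
  shows "(\<Sum>i<n. card {j. j < m \<and> P i j}) = (\<Sum>j<m. card {i. i < n \<and> P i j})"
proof -
  have card_eq: "card {x. x < k \<and> Q x} = (\<Sum>x<k. of_bool (Q x))" for k and Q :: "nat \<Rightarrow> bool"
    by (simp add: Int_def)
  show ?thesis
    unfolding card_eq by (rule sum.swap)
qed

lemma sum_diff_const_lessThan:
  fixes a :: "nat \<Rightarrow> nat"
  assumes "\<forall>j<m. a j \<le> n"
  shows "(\<Sum>j<m. n - a j) = m * n - (\<Sum>j<m. a j)"
  using assms sum_subtractf_nat[of "{..<m}" a "\<lambda>_. n"] by simp

definition minority :: "nat \<Rightarrow> nat \<Rightarrow> nat" where
  "minority n k = min k (n - k)"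

lemma minority_le: "minority n k \<le> k" "minority n k \<le> n - k" "minority n k \<le> n div 2"
  unfolding minority_def by linarith+

lemma minority_eq_iff:
  assumes "k \<le> n"
  shows "minority n k = k \<longleftrightarrow> 2 * k \<le> n"
    and "minority n k = n - k \<longleftrightarrow> n \<le> 2 * k"
    and "minority n k = n div 2 \<longleftrightarrow> k \<in> {n div 2, (n + 1) div 2}"
  using assms unfolding minority_def by auto

lemma sum_minority_eq_iff:
  assumes "\<forall>j<m. a j \<le> n"
  shows "(\<Sum>j<m. minority n (a j)) = (\<Sum>j<m. a j) \<longleftrightarrow> (\<forall>j<m. 2 * a j \<le> n)"
    and "(\<Sum>j<m. minority n (a j)) = m * n - (\<Sum>j<m. a j) \<longleftrightarrow> (\<forall>j<m. n \<le> 2 * a j)"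
    and "(\<Sum>j<m. minority n (a j)) = m * (n div 2) \<longleftrightarrow>
           (\<forall>j<m. a j \<in> {n div 2, (n + 1) div 2})"
proof -
  show "(\<Sum>j<m. minority n (a j)) = (\<Sum>j<m. a j) \<longleftrightarrow> (\<forall>j<m. 2 * a j \<le> n)"
    using assms by (simp add: sum_eq_sum_iff_pointwise minority_le minority_eq_iff Ball_def)
  show "(\<Sum>j<m. minority n (a j)) = m * n - (\<Sum>j<m. a j) \<longleftrightarrow> (\<forall>j<m. n \<le> 2 * a j)"
    using assms unfolding sum_diff_const_lessThan[OF assms, symmetric]
    by (simp add: sum_eq_sum_iff_pointwise minority_le minority_eq_iff Ball_def)
  show "(\<Sum>j<m. minority n (a j)) = m * (n div 2) \<longleftrightarrow>
          (\<forall>j<m. a j \<in> {n div 2, (n + 1) div 2})"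
    using assms sum_eq_sum_iff_pointwise[of "{..<m}" "\<lambda>j. minority n (a j)" "\<lambda>_. n div 2"]
    by (simp add: minority_le minority_eq_iff Ball_def)
qed

lemma sum_minority_le:
  assumes "\<forall>j<m. a j \<le> n"
  shows "(\<Sum>j<m. minority n (a j)) \<le> (\<Sum>j<m. a j)"
    and "(\<Sum>j<m. minority n (a j)) \<le> m * n - (\<Sum>j<m. a j)"
    and "(\<Sum>j<m. minority n (a j)) \<le> m * (n div 2)"
proof -
  show "(\<Sum>j<m. minority n (a j)) \<le> (\<Sum>j<m. a j)"
    by (intro sum_mono minority_le)
  have "(\<Sum>j<m. minority n (a j)) \<le> (\<Sum>j<m. n - a j)"
    by (intro sum_mono minority_le)
  also have "\<dots> = m * n - (\<Sum>j<m. a j)"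
    using assms by (rule sum_diff_const_lessThan)
  finally show "(\<Sum>j<m. minority n (a j)) \<le> m * n - (\<Sum>j<m. a j)" .
  show "(\<Sum>j<m. minority n (a j)) \<le> m * (n div 2)"
    using sum_mono[of "{..<m}" "\<lambda>j. minority n (a j)" "\<lambda>_. n div 2"] by (simp add: minority_le)
qed

lemma even_split:
  fixes m S :: nat
  assumes "m > 0"
  obtains b where "(\<Sum>j<m. b j) = S"
    and "\<And>j k. S \<le> m * k \<Longrightarrow> b j \<le> k" and "\<And>j k. m * k \<le> S \<Longrightarrow> k \<le> b j"
proof
  define b where "b j = S div m + of_bool (j < S mod m)" for j
  have "{..<m} \<inter> {j. j < S mod m} = {..<S mod m}"
    using mod_less_divisor[OF assms, of S] by auto
  then show "(\<Sum>j<m. b j) = S"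
    unfolding b_def by (simp add: sum.distrib)
  show "b j \<le> k" if "S \<le> m * k" for j k
  proof -
    have "m * b j < S + m"
    proof (cases "j < S mod m")
      case True
      then have "m * b j = m * (S div m) + m" by (simp add: b_def)
      then show ?thesis using True mult_div_mod_eq[of m S] by linarith
    next
      case False
      then have "m * b j = m * (S div m)" by (simp add: b_def)
      then show ?thesis using mult_div_mod_eq[of m S] assms by linarith
    qed
    then have "m * b j < m * (k + 1)" using that by simp
    then have "b j < k + 1" using mult_less_cancel1 by blast
    then show ?thesis by simp
  qed
  show "k \<le> b j" if "m * k \<le> S" for j k
  proof -
    have "k = m * k div m" using assms by simp
    also have "\<dots> \<le> S div m" using that by (rule div_le_mono)
    also have "\<dots> \<le> b j" unfolding b_def by simp
    finally show ?thesis .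
  qed
qed

lemma sum_minority_attains_bound:
  assumes "m > 0" and "S \<le> m * n"
  obtains b where "\<forall>j<m. b j \<le> n" and "(\<Sum>j<m. b j) = S"
    and "(\<Sum>j<m. minority n (b j)) \<in> {S, m * n - S, m * (n div 2)}"
proof -
  obtain b where sum_b: "(\<Sum>j<m. b j) = S"
    and upper: "\<And>j k. S \<le> m * k \<Longrightarrow> b j \<le> k" and lower: "\<And>j k. m * k \<le> S \<Longrightarrow> k \<le> b j"
    using even_split[OF assms(1)] by blast
  have b_le: "\<forall>j<m. b j \<le> n" using upper assms(2) by blast
  consider "S \<le> m * (n div 2)" | "m * (n - n div 2) \<le> S"
    | "m * (n div 2) \<le> S" "S \<le> m * (n - n div 2)"
    by linarith
  then have "(\<Sum>j<m. minority n (b j)) \<in> {S, m * n - S, m * (n div 2)}"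
  proof cases
    case 1
    have "2 * b j \<le> n" for j using upper[OF 1, of j] by presburger
    then show ?thesis using sum_minority_eq_iff(1)[OF b_le] sum_b by simp
  next
    case 2
    have "n \<le> 2 * b j" for j using lower[OF 2, of j] by presburger
    then show ?thesis using sum_minority_eq_iff(2)[OF b_le] sum_b by simp
  next
    case 3
    have "b j \<in> {n div 2, (n + 1) div 2}" for j
      using upper[OF 3(2), of j] lower[OF 3(1), of j] by auto
    then show ?thesis using sum_minority_eq_iff(3)[OF b_le] by simp
  qed
  with b_le sum_b that show ?thesis by blast
qed

lemma sum_minority_maximal_iff:
  fixes m n :: nat and a :: "nat \<Rightarrow> nat"
  assumes "m > 0" and a_le: "\<forall>j<m. a j \<le> n"
  shows "(\<forall>b. (\<forall>j<m. b j \<le> n) \<longrightarrow> (\<Sum>j<m. b j) = (\<Sum>j<m. a j) \<longrightarrow>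
             (\<Sum>j<m. minority n (b j)) \<le> (\<Sum>j<m. minority n (a j))) \<longleftrightarrow>
         (\<forall>j<m. n \<le> 2 * a j) \<or> (\<forall>j<m. 2 * a j \<le> n) \<or>
         (\<forall>j<m. a j \<in> {n div 2, (n + 1) div 2})"
    (is "?maximal \<longleftrightarrow> _")
proof -
  define S where "S = (\<Sum>j<m. a j)"
  define bounds where "bounds = {S, m * n - S, m * (n div 2)}"
  have below_bounds: "(\<Sum>j<m. minority n (b j)) \<le> x"
    if "\<forall>j<m. b j \<le> n" "(\<Sum>j<m. b j) = S" "x \<in> bounds" for b x
    using sum_minority_le[OF that(1)] that(2,3) unfolding bounds_def by auto
  have "?maximal \<longleftrightarrow> (\<Sum>j<m. minority n (a j)) \<in> bounds"
  proof
    assume ?maximal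
    have "S \<le> m * n"
      using sum_mono[of "{..<m}" a "\<lambda>_. n"] a_le unfolding S_def by simp
    then obtain b where "\<forall>j<m. b j \<le> n" "(\<Sum>j<m. b j) = S"
      and "(\<Sum>j<m. minority n (b j)) \<in> bounds"
      using sum_minority_attains_bound[OF assms(1)] unfolding bounds_def by blast
    with \<open>?maximal\<close> below_bounds[OF a_le] show "(\<Sum>j<m. minority n (a j)) \<in> bounds"
      unfolding S_def by (metis antisym)
  next
    assume "(\<Sum>j<m. minority n (a j)) \<in> bounds"
    with below_bounds show ?maximal
      unfolding S_def by blast
  qed
  also have "\<dots> \<longleftrightarrow> (\<forall>j<m. n \<le> 2 * a j) \<or> (\<forall>j<m. 2 * a j \<le> n) \<or>
                    (\<forall>j<m. a j \<in> {n div 2, (n + 1) div 2})"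
    using sum_minority_eq_iff[OF a_le] unfolding bounds_def S_def by blast
  finally show ?thesis .
qed

lemma approvers_subset: "approvers n V j \<subseteq> {..<n}"
  unfolding approvers_def by auto

lemma card_approvers_le: "card (approvers n V j) \<le> n"
  using card_mono[OF _ approvers_subset] by fastforce

lemma card_disapprovers: "card {i. i < n \<and> \<not> V i j} = n - card (approvers n V j)"
proof -
  have "{i. i < n \<and> \<not> V i j} = {..<n} - approvers n V j"
    unfolding approvers_def by auto
  then show ?thesis
    using card_Diff_subset[OF finite_subset[OF approvers_subset] approvers_subset] by simp
qed

lemma central_iff:
  "central m n V u \<longleftrightarrow>
     (\<forall>j<m. n \<le> 2 * (if u j then card (approvers n V j) else n - card (approvers n V j)))"
proof -
  have "card {i. i < n \<and> V i j = u j} =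
          (if u j then card (approvers n V j) else n - card (approvers n V j))" for j
    by (cases "u j") (simp_all add: card_disapprovers approvers_def)
  then show ?thesis
    unfolding central_def by presburger
qed

lemma majority_vote_central: "(\<lambda>j. n \<le> 2 * card (approvers n V j)) \<in> cen m n V"
  unfolding cen_def central_iff by auto

lemma card_disagreeing_central:
  assumes "u \<in> cen m n V" and "j < m"
  shows "card {i. i < n \<and> V i j \<noteq> u j} = minority n (card (approvers n V j))"
proof -
  have central: "n \<le> 2 * (if u j then card (approvers n V j) else n - card (approvers n V j))"
    using assms unfolding cen_def central_iff by blast
  show ?thesis
  proof (cases "u j")
    case True
    then have "{i. i < n \<and> V i j \<noteq> u j} = {i. i < n \<and> \<not> V i j}" by simp
    with True central show ?thesis by (simp add: card_disapprovers minority_def)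
  next
    case False
    then have "{i. i < n \<and> V i j \<noteq> u j} = approvers n V j" unfolding approvers_def by simp
    with False central card_approvers_le[of n V j] show ?thesis by (auto simp: minority_def)
  qed
qed

lemma chd_eq: "chd m n V = (\<Sum>j<m. minority n (card (approvers n V j)))"
proof -
  define u where "u = (SOME u. u \<in> cen m n V)"
  have "u \<in> cen m n V"
    unfolding u_def some_in_eq using majority_vote_central by blast
  have "chd m n V = (\<Sum>j<m. card {i. i < n \<and> V i j \<noteq> u j})"
    unfolding chd_def ham_def u_def[symmetric] by (rule sum_card_rows_eq_sum_card_columns)
  also have "\<dots> = (\<Sum>j<m. minority n (card (approvers n V j)))"
    using \<open>u \<in> cen m n V\<close> by (intro sum.cong refl card_disagreeing_central) auto
  finally show ?thesis .
qed

lemma satr_eq: "satr m n V = real (\<Sum>j<m. card (approvers n V j)) / (real n * real m)"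
  unfolding satr_def approved_def approvers_def of_nat_sum[symmetric]
  by (subst sum_card_rows_eq_sum_card_columns) (rule refl)

lemma satr_eq_iff:
  assumes "m > 0" and "n > 0"
  shows "satr m n V = satr m n W \<longleftrightarrow>
           (\<Sum>j<m. card (approvers n V j)) = (\<Sum>j<m. card (approvers n W j))"
  using assms unfolding satr_eq by (simp del: of_nat_sum)

lemma central_cong: "(\<And>j. j < m \<Longrightarrow> u j = v j) \<Longrightarrow> central m n V u \<longleftrightarrow> central m n V v"
  unfolding central_def by simp

lemma all_approving_central_iff:
  "(\<exists>u\<in>cen m n V. \<forall>j<m. u j) \<longleftrightarrow> (\<forall>j<m. n \<le> 2 * card (approvers n V j))"
proof -
  have "(\<exists>u\<in>cen m n V. \<forall>j<m. u j) \<longleftrightarrow> central m n V (\<lambda>_. True)"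
    unfolding cen_def using central_cong[of m _ "\<lambda>_. True"] by blast
  also have "\<dots> \<longleftrightarrow> (\<forall>j<m. n \<le> 2 * card (approvers n V j))"
    unfolding central_iff by simp
  finally show ?thesis .
qed

lemma all_disapproving_central_iff:
  "(\<exists>u\<in>cen m n V. \<forall>j<m. \<not> u j) \<longleftrightarrow> (\<forall>j<m. 2 * card (approvers n V j) \<le> n)"
proof -
  have "(\<exists>u\<in>cen m n V. \<forall>j<m. \<not> u j) \<longleftrightarrow> central m n V (\<lambda>_. False)"
    unfolding cen_def using central_cong[of m _ "\<lambda>_. False"] by blast
  also have "\<dots> \<longleftrightarrow> (\<forall>j<m. n \<le> 2 * (n - card (approvers n V j)))"
    unfolding central_iff by simp
  also have "\<dots> \<longleftrightarrow> (\<forall>j<m. 2 * card (approvers n V j) \<le> n)"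
  proof -
    have "n \<le> 2 * (n - card (approvers n V j)) \<longleftrightarrow> 2 * card (approvers n V j) \<le> n" for j
      using card_approvers_le[of n V j] by linarith
    then show ?thesis by simp
  qed
  finally show ?thesis .
qed

definition threshold_election :: "(nat \<Rightarrow> nat) \<Rightarrow> election" where
  "threshold_election b = (\<lambda>i j. i < b j)"

lemma card_approvers_threshold_election:
  "b j \<le> n \<Longrightarrow> card (approvers n (threshold_election b) j) = b j"
proof -
  assume "b j \<le> n"
  then have "approvers n (threshold_election b) j = {..<b j}"
    unfolding approvers_def threshold_election_def by auto
  then show ?thesis by simp
qed

lemma chd_maximal_iff:
  assumes "m > 0" and "n > 0"
  shows "(\<forall>E'. satr m n E' = satr m n E \<longrightarrow> chd m n E' \<le> chd m n E) \<longleftrightarrow>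
         (\<forall>b. (\<forall>j<m. b j \<le> n) \<longrightarrow> (\<Sum>j<m. b j) = (\<Sum>j<m. card (approvers n E j)) \<longrightarrow>
              (\<Sum>j<m. minority n (b j)) \<le> (\<Sum>j<m. minority n (card (approvers n E j))))"
    (is "?elections \<longleftrightarrow> ?counts")
proof
  assume ?elections
  show ?counts
  proof (intro allI impI)
    fix b assume b_le: "\<forall>j<m. b j \<le> n" and sum_b: "(\<Sum>j<m. b j) = (\<Sum>j<m. card (approvers n E j))"
    have counts: "(\<Sum>j<m. f (card (approvers n (threshold_election b) j))) = (\<Sum>j<m. f (b j))" for f
      using b_le by (intro sum.cong refl) (simp add: card_approvers_threshold_election)
    have "satr m n (threshold_election b) = satr m n E"
      using counts[of id] sum_b by (simp add: satr_eq_iff assms)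
    with \<open>?elections\<close> have "chd m n (threshold_election b) \<le> chd m n E" by blast
    then show "(\<Sum>j<m. minority n (b j)) \<le> (\<Sum>j<m. minority n (card (approvers n E j)))"
      by (simp add: chd_eq counts)
  qed
next
  assume ?counts
  show ?elections
  proof (intro allI impI)
    fix E' assume "satr m n E' = satr m n E"
    then have "(\<Sum>j<m. card (approvers n E' j)) = (\<Sum>j<m. card (approvers n E j))"
      by (simp add: satr_eq_iff assms)
    with \<open>?counts\<close> show "chd m n E' \<le> chd m n E"
      unfolding chd_eq by (simp add: card_approvers_le)
  qed
qed

theorem lemma2:
  fixes m n :: nat and \<alpha> :: real and E :: election
  assumes "m > 0" and "n > 0" and "0 \<le> \<alpha>" and "\<alpha> \<le> 1"
    and "satr m n E = \<alpha>"
  shows "(\<forall>E'. satr m n E' = \<alpha> \<longrightarrow> chd m n E' \<le> chd m n E) \<longleftrightarrow>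
         ((\<exists>u\<in>cen m n E. \<forall>j<m. u j) \<or>
          (\<exists>u\<in>cen m n E. \<forall>j<m. \<not> u j) \<or>
          (\<forall>j<m. card (approvers n E j) \<in> {n div 2, (n + 1) div 2}))"
proof -
  have "(\<forall>E'. satr m n E' = \<alpha> \<longrightarrow> chd m n E' \<le> chd m n E) \<longleftrightarrow>
        (\<forall>b. (\<forall>j<m. b j \<le> n) \<longrightarrow> (\<Sum>j<m. b j) = (\<Sum>j<m. card (approvers n E j)) \<longrightarrow>
             (\<Sum>j<m. minority n (b j)) \<le> (\<Sum>j<m. minority n (card (approvers n E j))))"
    using chd_maximal_iff[OF assms(1,2), of E] assms(5) by simp
  also have "\<dots> \<longleftrightarrow> (\<forall>j<m. n \<le> 2 * card (approvers n E j)) \<or> (\<forall>j<m. 2 * card (approvers n E j) \<le> n) \<or>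
                    (\<forall>j<m. card (approvers n E j) \<in> {n div 2, (n + 1) div 2})"
    using sum_minority_maximal_iff[OF assms(1), of "\<lambda>j. card (approvers n E j)" n] card_approvers_le
    by simp
  finally show ?thesis
    by (simp only: all_approving_central_iff all_disapproving_central_iff)
qed

end
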